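(* Let $T\in\mathbb{N}$. Assume there exists a measurable function $K:\mathbb{Y}\times\mathbb{R}^{n_\epsilon}\to\mathbb{Y}$ such that $H(x,e)=K(h(x),e)$ for all $x\in\mathbb{X}$, $e\in\mathbb{R}^{n_\epsilon}$, and that for all probability measures $\nu,\nu'$ on $\mathbb{Y}^{T+1}$ with $\nu\neq\nu'$ there exists a Borel set $A\subset\mathbb{Y}^{T+1}$ with $$\int_{\mathbb{Y}^{T+1}}\mathbb{P}[K(\hat\gamma,\epsilon)\in A]\,d\nu(\hat\gamma)\neq\int_{\mathbb{Y}^{T+1}}\mathbb{P}[K(\hat\gamma,\epsilon)\in A]\,d\nu'(\hat\gamma),$$ where $\epsilon=(\epsilon_0,\dots,\epsilon_T)$ and $K$ is applied element-wise, $K(\hat\gamma,\epsilon)=(K(\hat\gamma_0,\epsilon_0),\dots,K(\hat\gamma_T,\epsilon_T))$. Assume moreover that there is no process noise, i.e., $\eta_t=0$ almost surely for all $t$. Then for all $x_a,x_b\in\mathbb{X}$, $x_a$ and $x_b$ are distinguishable in time $T$ for the deterministic system if and only if they are distributionally distinguishable in time $T$ for the stochastic system.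
   Context: Let $\mathbb{X}\subset\mathbb{R}^{n_x}$ and $\mathbb{Y}\subset\mathbb{R}^{n_y}$ be open sets with their Borel $\sigma$-algebras; random variables live on a probability space $(\Omega,\mathcal{A},\mathbb{P})$. The deterministic system is $x_{t+1}=f(x_t)$, $y_t=h(x_t)$ with $f:\mathbb{X}\to\mathbb{X}$, $h:\mathbb{X}\to\mathbb{Y}$; $\phi(t,x_0)$ is its state at time $t$ from $x_0$ and $\gamma(T,x_0)=(h(\phi(0,x_0)),\dots,h(\phi(T,x_0)))\in\mathbb{Y}^{T+1}$. Two states $x_a,x_b$ are distinguishable in time $T$ for the deterministic system if $\gamma(T,x_a)\neq\gamma(T,x_b)$. The stochastic system is $X_{t+1}=F(X_t,\eta_t)$, $Y_t=H(X_t,\epsilon_t)$ with random $\eta_t\in\mathbb{R}^{n_\eta}$, $\epsilon_t\in\mathbb{R}^{n_\epsilon}$, $F(x,0)=f(x)$, $H(x,0)=h(x)$, $X_0\sim\mu$ for a probability measure $\mu$ on $\mathbb{X}$, and $\eta_t,\epsilon_t$ independent of $(X_s)_{s\le t}$. $\Phi(t,\mu)$ is the random state at time $t$ from $X_0\sim\mu$; $\Gamma(T,\mu)=(H(\Phi(0,\mu),\epsilon_0),\dots,H(\Phi(T,\mu),\epsilon_T))$ with law $\mathbb{P}^T_\mu$. Initial distributions $\mu_a,\mu_b$ are distributionally distinguishable in time $T$ if $\mathbb{P}^T_{\mu_a}\neq\mathbb{P}^T_{\mu_b}$; for states $x$, one uses the Dirac measure $\delta_x$ as initial distribution. *)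

theory Defs
  imports "HOL-Probability.Probability"
begin

definition phi :: "('x \<Rightarrow> 'x) \<Rightarrow> nat \<Rightarrow> 'x \<Rightarrow> 'x" where
  "phi f t x0 = (f ^^ t) x0"

text \<open>Output trajectory (h(phi 0 x0), ..., h(phi T x0)), as an element of Y^{T+1}
  indexed by {..T}.\<close>
definition gamma :: "('x \<Rightarrow> 'x) \<Rightarrow> ('x \<Rightarrow> 'y) \<Rightarrow> nat \<Rightarrow> 'x \<Rightarrow> (nat \<Rightarrow> 'y)" where
  "gamma f h T x0 = (\<lambda>t\<in>{..T}. h (phi f t x0))"

definition det_distinguishable ::
  "('x \<Rightarrow> 'x) \<Rightarrow> ('x \<Rightarrow> 'y) \<Rightarrow> nat \<Rightarrow> 'x \<Rightarrow> 'x \<Rightarrow> bool" where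
  "det_distinguishable f h T xa xb \<longleftrightarrow> gamma f h T xa \<noteq> gamma f h T xb"

primrec Phi :: "('x \<Rightarrow> 'n \<Rightarrow> 'x) \<Rightarrow> (nat \<Rightarrow> 'w \<Rightarrow> 'n) \<Rightarrow> ('w \<Rightarrow> 'x) \<Rightarrow> nat \<Rightarrow> 'w \<Rightarrow> 'x" where
  "Phi F eta X0 0 \<omega> = X0 \<omega>"
| "Phi F eta X0 (Suc t) \<omega> = F (Phi F eta X0 t \<omega>) (eta t \<omega>)"

definition Gamma :: "('x \<Rightarrow> 'n \<Rightarrow> 'x) \<Rightarrow> ('x \<Rightarrow> 'e \<Rightarrow> 'y) \<Rightarrow> (nat \<Rightarrow> 'w \<Rightarrow> 'n) \<Rightarrow> (nat \<Rightarrow> 'w \<Rightarrow> 'e)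
    \<Rightarrow> ('w \<Rightarrow> 'x) \<Rightarrow> nat \<Rightarrow> 'w \<Rightarrow> (nat \<Rightarrow> 'y)" where
  "Gamma F H eta eps X0 T \<omega> = (\<lambda>t\<in>{..T}. H (Phi F eta X0 t \<omega>) (eps t \<omega>))"

text \<open>Measurable space Y^{T+1} (Y with its Borel sigma-algebra, i.e. the trace of the Borel sets).\<close>
definition Yspace :: "'y::topological_space set \<Rightarrow> nat \<Rightarrow> (nat \<Rightarrow> 'y) measure" where
  "Yspace Ys T = (\<Pi>\<^sub>M t\<in>{..T}. restrict_space borel Ys)"

text \<open>Law P^T_mu of Gamma(T, mu) where X0 is a random variable with law mu.\<close>
definition law_Gamma :: "'w measure \<Rightarrow> 'y::topological_space set \<Rightarrow> ('x \<Rightarrow> 'n \<Rightarrow> 'x) \<Rightarrow> ('x \<Rightarrow> 'e \<Rightarrow> 'y)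
    \<Rightarrow> (nat \<Rightarrow> 'w \<Rightarrow> 'n) \<Rightarrow> (nat \<Rightarrow> 'w \<Rightarrow> 'e) \<Rightarrow> ('w \<Rightarrow> 'x) \<Rightarrow> nat \<Rightarrow> (nat \<Rightarrow> 'y) measure" where
  "law_Gamma M Ys F H eta eps X0 T = distr M (Yspace Ys T) (Gamma F H eta eps X0 T)"

text \<open>Distributional distinguishability of two states x_a, x_b: the initial distributions
  are the Dirac measures, i.e. X0 is the constant random variable.\<close>
definition dist_distinguishable :: "'w measure \<Rightarrow> 'y::topological_space set \<Rightarrow> ('x \<Rightarrow> 'n \<Rightarrow> 'x)
    \<Rightarrow> ('x \<Rightarrow> 'e \<Rightarrow> 'y) \<Rightarrow> (nat \<Rightarrow> 'w \<Rightarrow> 'n) \<Rightarrow> (nat \<Rightarrow> 'w \<Rightarrow> 'e) \<Rightarrow> nat \<Rightarrow> 'x \<Rightarrow> 'x \<Rightarrow> bool" where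
  "dist_distinguishable M Ys F H eta eps T xa xb \<longleftrightarrow>
     law_Gamma M Ys F H eta eps (\<lambda>_. xa) T \<noteq> law_Gamma M Ys F H eta eps (\<lambda>_. xb) T"

end

theory Submission
  imports Defs
begin

text \<open>Without process noise the state of the stochastic system started in \<open>x\<close> follows the
  deterministic trajectory almost surely, so its output is the noiseless output \<open>\<gamma>(T, x)\<close>
  corrupted by \<open>K(\<cdot>, \<epsilon>)\<close>; hence the law of the output only depends on \<open>\<gamma>(T, x)\<close>.
  Conversely, the law of the output is the image of the Dirac measure at \<open>\<gamma>(T, x)\<close> under the
  observation kernel of \<open>K\<close>, and the separation hypothesis says that this kernel is injective
  on probability measures; since Dirac measures at distinct points of \<open>Y\<^sup>T\<^sup>+\<^sup>1\<close> differ, distinct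
  noiseless outputs yield distinct output laws.\<close>

definition noisy_output :: "('y \<Rightarrow> 'e \<Rightarrow> 'y) \<Rightarrow> (nat \<Rightarrow> 'w \<Rightarrow> 'e) \<Rightarrow> nat \<Rightarrow> (nat \<Rightarrow> 'y) \<Rightarrow> 'w \<Rightarrow> nat \<Rightarrow> 'y"
  where "noisy_output K eps T g \<omega> = (\<lambda>t\<in>{..T}. K (g t) (eps t \<omega>))"

lemma integral_return_eq_if:
  fixes g :: "_ \<Rightarrow> 'a::{banach, second_countable_topology}"
  assumes "x \<in> space M"
  shows "(\<integral>a. g a \<partial>return M x) = (if g \<in> borel_measurable M then g x else 0)"
proof (cases "g \<in> borel_measurable M")
  case False
  then have "\<not> integrable (return M x) g"
    by (auto dest: borel_measurable_integrable simp: measurable_cong_sets[OF sets_return refl])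
  with False show ?thesis by (simp add: not_integrable_integral_eq)
qed (simp add: integral_return assms)

lemma space_Yspace: "space (Yspace Ys T) = (\<Pi>\<^sub>E t\<in>{..T}. Ys)"
  by (simp add: Yspace_def space_PiM space_restrict_space)

lemma measurable_Yspace:
  assumes "\<And>t. t \<le> T \<Longrightarrow> Z t \<in> measurable M (restrict_space borel Ys)"
  shows "(\<lambda>\<omega>. \<lambda>t\<in>{..T}. Z t \<omega>) \<in> measurable M (Yspace Ys T)"
  unfolding Yspace_def using assms by (intro measurable_restrict) auto

lemma inj_on_return_Yspace:
  fixes Ys :: "'y::t1_space set"
  shows "inj_on (return (Yspace Ys T)) (space (Yspace Ys T))"
proof (rule inj_onI, rule ccontr)
  fix g g' assume g: "g \<in> space (Yspace Ys T)" and g': "g' \<in> space (Yspace Ys T)"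
    and eq: "return (Yspace Ys T) g = return (Yspace Ys T) g'" and "g \<noteq> g'"
  then obtain t where t: "t \<le> T" "g t \<noteq> g' t"
    by (metis PiE_ext atMost_iff space_Yspace)
  have "{g t} \<in> sets (restrict_space borel Ys)"
    using g t by (auto simp: space_Yspace sets_restrict_space image_iff borel_closed intro!: bexI[of _ "{g t}"])
  moreover have "(\<lambda>g. g t) \<in> measurable (Yspace Ys T) (restrict_space borel Ys)"
    unfolding Yspace_def using t by (intro measurable_component_singleton) auto
  ultimately have "(\<lambda>g. g t) -` {g t} \<inter> space (Yspace Ys T) \<in> sets (Yspace Ys T)"
    by (rule measurable_sets[rotated])
  then show False
    using arg_cong[OF eq, of "\<lambda>N. emeasure N ((\<lambda>g. g t) -` {g t} \<inter> space (Yspace Ys T))"] g g' t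
    by auto
qed

lemma phi_in_funcset:
  assumes "f \<in> Xs \<rightarrow> Xs" "x \<in> Xs"
  shows "phi f t x \<in> Xs"
  using assms by (induction t) (auto simp: phi_def)

lemma gamma_in_space_Yspace:
  assumes "f \<in> Xs \<rightarrow> Xs" "h \<in> Xs \<rightarrow> Ys" "x \<in> Xs"
  shows "gamma f h T x \<in> space (Yspace Ys T)"
  using phi_in_funcset[OF assms(1,3)] assms(2) by (auto simp: space_Yspace gamma_def)

lemma Phi_eq_phi_if_no_noise:
  assumes "\<And>t. eta t \<omega> = 0" "\<And>x. x \<in> Xs \<Longrightarrow> F x 0 = f x" "f \<in> Xs \<rightarrow> Xs" "x \<in> Xs"
  shows "Phi F eta (\<lambda>_. x) t \<omega> = phi f t x"
proof (induction t)
  case (Suc t)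
  with assms phi_in_funcset[OF assms(3,4), of t] show ?case by (simp add: phi_def)
qed (simp add: phi_def)

lemma measurable_Phi:
  assumes "(\<lambda>(x, n). F x n) \<in> measurable (X \<Otimes>\<^sub>M N) X" "\<And>t. eta t \<in> measurable M N"
    and "X0 \<in> measurable M X"
  shows "Phi F eta X0 t \<in> measurable M X"
  by (induction t) (auto intro: measurable_Pair_compose_split[OF assms(1)] assms(2,3))

lemma measurable_Gamma:
  assumes "(\<lambda>(x, e). H x e) \<in> measurable (X \<Otimes>\<^sub>M E) (restrict_space borel Ys)"
    and "\<And>t. eps t \<in> measurable M E" "\<And>t. Phi F eta X0 t \<in> measurable M X"
  shows "Gamma F H eta eps X0 T \<in> measurable M (Yspace Ys T)"
  unfolding Gamma_def[abs_def]
  by (intro measurable_Yspace measurable_Pair_compose_split[OF assms(1)] assms(2,3))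

lemma measurable_noisy_output:
  assumes "(\<lambda>(y, e). K y e) \<in> measurable (restrict_space borel Ys \<Otimes>\<^sub>M E) (restrict_space borel Ys)"
    and "\<And>t. eps t \<in> measurable M E" "g \<in> space (Yspace Ys T)"
  shows "noisy_output K eps T g \<in> measurable M (Yspace Ys T)"
  unfolding noisy_output_def[abs_def]
  using assms(3)
  by (intro measurable_Yspace measurable_Pair_compose_split[OF assms(1)] assms(2) measurable_const)
     (auto simp: space_Yspace space_restrict_space)

locale noise_free_system =
  fixes Xs :: "'x::topological_space set" and Ys :: "'y::topological_space set"
    and f :: "'x \<Rightarrow> 'x" and h :: "'x \<Rightarrow> 'y"
    and F :: "'x \<Rightarrow> 'n::{topological_space, zero} \<Rightarrow> 'x" and H :: "'x \<Rightarrow> 'e::topological_space \<Rightarrow> 'y"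
    and K :: "'y \<Rightarrow> 'e \<Rightarrow> 'y"
    and M :: "'w measure" and eta :: "nat \<Rightarrow> 'w \<Rightarrow> 'n" and eps :: "nat \<Rightarrow> 'w \<Rightarrow> 'e"
  assumes f_maps: "f \<in> Xs \<rightarrow> Xs" and h_maps: "h \<in> Xs \<rightarrow> Ys"
    and F_meas: "(\<lambda>(x, n). F x n) \<in> measurable (restrict_space borel Xs \<Otimes>\<^sub>M borel) (restrict_space borel Xs)"
    and H_meas: "(\<lambda>(x, e). H x e) \<in> measurable (restrict_space borel Xs \<Otimes>\<^sub>M borel) (restrict_space borel Ys)"
    and K_meas: "(\<lambda>(y, e). K y e) \<in> measurable (restrict_space borel Ys \<Otimes>\<^sub>M borel) (restrict_space borel Ys)"
    and F0: "\<And>x. x \<in> Xs \<Longrightarrow> F x 0 = f x"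
    and HK: "\<And>x e. x \<in> Xs \<Longrightarrow> H x e = K (h x) e"
    and eta_rv: "\<And>t. eta t \<in> borel_measurable M"
    and eps_rv: "\<And>t. eps t \<in> borel_measurable M"
    and no_process_noise: "\<And>t. AE \<omega> in M. eta t \<omega> = 0"
begin

lemma AE_Gamma_eq_noisy_output:
  assumes "x \<in> Xs"
  shows "AE \<omega> in M. Gamma F H eta eps (\<lambda>_. x) T \<omega> = noisy_output K eps T (gamma f h T x) \<omega>"
proof -
  have "AE \<omega> in M. \<forall>t. eta t \<omega> = 0"
    using no_process_noise by (simp add: AE_all_countable)
  then show ?thesis
  proof eventually_elim
    case (elim \<omega>)
    then have "Phi F eta (\<lambda>_. x) t \<omega> = phi f t x" for t
      using Phi_eq_phi_if_no_noise F0 f_maps assms by metis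
    then show ?case
      using phi_in_funcset[OF f_maps assms] by (auto simp: Gamma_def noisy_output_def gamma_def HK)
  qed
qed

lemma law_Gamma_eq_distr_noisy_output:
  assumes "x \<in> Xs"
  shows "law_Gamma M Ys F H eta eps (\<lambda>_. x) T
    = distr M (Yspace Ys T) (noisy_output K eps T (gamma f h T x))"
  unfolding law_Gamma_def
proof (rule distr_cong_AE[OF refl refl AE_Gamma_eq_noisy_output[OF assms]])
  show "Gamma F H eta eps (\<lambda>_. x) T \<in> measurable M (Yspace Ys T)"
    using assms by (intro measurable_Gamma[OF H_meas eps_rv] measurable_Phi[OF F_meas eta_rv])
      (auto intro: measurable_const simp: space_restrict_space)
  show "noisy_output K eps T (gamma f h T x) \<in> measurable M (Yspace Ys T)"
    by (intro measurable_noisy_output[OF K_meas eps_rv] gamma_in_space_Yspace[OF f_maps h_maps assms])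
qed

lemma measure_law_Gamma:
  assumes "x \<in> Xs" "A \<in> sets (Yspace Ys T)"
  shows "measure (law_Gamma M Ys F H eta eps (\<lambda>_. x) T) A
    = measure M {\<omega> \<in> space M. noisy_output K eps T (gamma f h T x) \<omega> \<in> A}"
  using assms
  by (simp add: law_Gamma_eq_distr_noisy_output measure_distr vimage_def Int_def conj_commute
      measurable_noisy_output[OF K_meas eps_rv] gamma_in_space_Yspace[OF f_maps h_maps])

end

theorem corollary1:
  fixes Xs :: "'x::euclidean_space set" and Ys :: "'y::euclidean_space set"
    and f :: "'x \<Rightarrow> 'x" and h :: "'x \<Rightarrow> 'y"
    and F :: "'x \<Rightarrow> 'n::euclidean_space \<Rightarrow> 'x" and H :: "'x \<Rightarrow> 'e::euclidean_space \<Rightarrow> 'y"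
    and K :: "'y \<Rightarrow> 'e \<Rightarrow> 'y"
    and M :: "'w measure" and eta :: "nat \<Rightarrow> 'w \<Rightarrow> 'n" and eps :: "nat \<Rightarrow> 'w \<Rightarrow> 'e"
    and T :: nat
  assumes "open Xs" and "open Ys"
    and "prob_space M"
    and f_maps: "f \<in> Xs \<rightarrow> Xs" and h_maps: "h \<in> Xs \<rightarrow> Ys"
    and F_meas: "(\<lambda>(x, n). F x n) \<in> measurable (restrict_space borel Xs \<Otimes>\<^sub>M borel) (restrict_space borel Xs)"
    and H_meas: "(\<lambda>(x, e). H x e) \<in> measurable (restrict_space borel Xs \<Otimes>\<^sub>M borel) (restrict_space borel Ys)"
    and F0: "\<And>x. x \<in> Xs \<Longrightarrow> F x 0 = f x"
    and H0: "\<And>x. x \<in> Xs \<Longrightarrow> H x 0 = h x"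
    and eta_rv: "\<And>t. eta t \<in> borel_measurable M"
    and eps_rv: "\<And>t. eps t \<in> borel_measurable M"
    and K_meas: "(\<lambda>(y, e). K y e) \<in> measurable (restrict_space borel Ys \<Otimes>\<^sub>M borel) (restrict_space borel Ys)"
    and HK: "\<And>x e. x \<in> Xs \<Longrightarrow> H x e = K (h x) e"
    and K_sep: "\<And>\<nu> \<nu>'. prob_space \<nu> \<Longrightarrow> sets \<nu> = sets (Yspace Ys T) \<Longrightarrow>
                   prob_space \<nu>' \<Longrightarrow> sets \<nu>' = sets (Yspace Ys T) \<Longrightarrow> \<nu> \<noteq> \<nu>' \<Longrightarrow>
                   \<exists>A \<in> sets (Yspace Ys T).
                     (\<integral>g. measure M {\<omega> \<in> space M. (\<lambda>t\<in>{..T}. K (g t) (eps t \<omega>)) \<in> A} \<partial>\<nu>)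
                     \<noteq> (\<integral>g. measure M {\<omega> \<in> space M. (\<lambda>t\<in>{..T}. K (g t) (eps t \<omega>)) \<in> A} \<partial>\<nu>')"
    and no_process_noise: "\<And>t. AE \<omega> in M. eta t \<omega> = 0"
  shows "\<forall>xa \<in> Xs. \<forall>xb \<in> Xs.
           det_distinguishable f h T xa xb \<longleftrightarrow> dist_distinguishable M Ys F H eta eps T xa xb"
proof (intro ballI)
  interpret noise_free_system Xs Ys f h F H K M eta eps
    by unfold_locales fact+
  fix xa xb assume xa: "xa \<in> Xs" and xb: "xb \<in> Xs"
  let ?Y = "Yspace Ys T"
  let ?ga = "gamma f h T xa" and ?gb = "gamma f h T xb"
  let ?prob = "\<lambda>A g. measure M {\<omega> \<in> space M. noisy_output K eps T g \<omega> \<in> A}"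
  have ga: "?ga \<in> space ?Y" and gb: "?gb \<in> space ?Y"
    using gamma_in_space_Yspace[OF f_maps h_maps] xa xb by auto
  show "det_distinguishable f h T xa xb \<longleftrightarrow> dist_distinguishable M Ys F H eta eps T xa xb"
  proof
    assume "det_distinguishable f h T xa xb"
    then have "return ?Y ?ga \<noteq> return ?Y ?gb"
      using inj_on_return_Yspace[THEN inj_onD, OF _ ga gb] by (auto simp: det_distinguishable_def)
    then obtain A where A: "A \<in> sets ?Y"
      and "(\<integral>g. ?prob A g \<partial>return ?Y ?ga) \<noteq> (\<integral>g. ?prob A g \<partial>return ?Y ?gb)"
      using K_sep[of "return ?Y ?ga" "return ?Y ?gb", folded noisy_output_def]
        prob_space_return[OF ga] prob_space_return[OF gb] by auto
    \<comment> \<open>\<open>?prob A\<close> need not be measurable, but then both integrals would vanish.\<close>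
    then have "?prob A ?ga \<noteq> ?prob A ?gb"
      by (auto simp: integral_return_eq_if ga gb split: if_splits)
    then show "dist_distinguishable M Ys F H eta eps T xa xb"
      by (auto simp: dist_distinguishable_def measure_law_Gamma[OF xa A, symmetric]
          measure_law_Gamma[OF xb A, symmetric])
  next
    assume "dist_distinguishable M Ys F H eta eps T xa xb"
    then show "det_distinguishable f h T xa xb"
      by (auto simp: det_distinguishable_def dist_distinguishable_def
          law_Gamma_eq_distr_noisy_output xa xb)
  qed
qed

end
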